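(* Let $k\ge 1$ be an integer, $\Delta\ge 0$, and let $w_1\ge w_2\ge\cdots\ge w_N\ge 0$ be reals (with the convention $w_j:=0$ for $j>N$). Suppose that $w_1+w_{k+1}<\tfrac79$, $w_{2k+1}\le\Delta$, and $\sum_{j=1}^N w_j>k\left(\tfrac79+\Delta\right)$. Then the values $w_j$ with $j>3k$ can be divided fractionally among $k$ bundles so that, for every $r\in\{1,\dots,k\}$, bundle $r$ consists of $w_r,w_{k+r},w_{2k+r}$ plus its share of the tail and has total value greater than $\tfrac79+\Delta$. Formally, there exist reals $x_{r,j}\ge 0$ ($1\le r\le k$, $3k<j\le N$) with $\sum_{r=1}^k x_{r,j}=w_j$ for all $j>3k$ and $$w_r+w_{k+r}+w_{2k+r}+\sum_{j>3k}x_{r,j}>\tfrac79+\Delta\quad\text{for all } r\in\{1,\dots,k\}.$$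
   Context: In the paper, the $w_j$ are agent $i$'s values (normalized so that her target is 1) of the items of the witness allocation in round $k$, $\Delta$ is the largest value among witness items worth less than $2/9$ (at most $2k$ items are worth at least $2/9$, which gives $w_{2k+1}\le\Delta$), and the sum hypothesis is the "Water-Level Condition" that every one of the $k$ witness bundles is worth more than $\tfrac79+\Delta$. Items of small value ("water") are treated as fractionally divisible. *)

theory Defs
  imports Complex_Main
begin

definition wext :: "(nat \<Rightarrow> real) \<Rightarrow> nat \<Rightarrow> nat \<Rightarrow> real" where
  "wext w N j = (if 1 \<le> j \<and> j \<le> N then w j else 0)"

end

theory Submission
  imports Defs
begin

text \<open>Bundle r starts with b_r = w_r + w_{k+r} + w_{2k+r}, which by monotonicity is at most
w_1 + w_{k+1} + w_{2k+1} < 7/9 + \<Delta>. By the sum hypothesis the tail w_{3k+1} + ... + w_N exceeds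
the total deficit \<Sum>_r (7/9 + \<Delta> - b_r). So each bundle receives its deficit plus an equal share of
the surplus, and every tail item is cut in proportion to these amounts.\<close>

lemma exists_transport_plan:
  fixes a :: "'i \<Rightarrow> real" and w :: "'j \<Rightarrow> real"
  assumes "finite I" "finite J"
    and "\<And>r. r \<in> I \<Longrightarrow> a r \<ge> 0" and "\<And>j. j \<in> J \<Longrightarrow> w j \<ge> 0"
    and "sum a I = sum w J"
  shows "\<exists>x. (\<forall>r\<in>I. \<forall>j\<in>J. x r j \<ge> 0)
           \<and> (\<forall>j\<in>J. (\<Sum>r\<in>I. x r j) = w j)
           \<and> (\<forall>r\<in>I. (\<Sum>j\<in>J. x r j) = a r)"
proof (cases "sum w J = 0")
  case True
  then have "\<forall>j\<in>J. w j = 0" "\<forall>r\<in>I. a r = 0"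
    using assms sum_nonneg_eq_0_iff[of J w] sum_nonneg_eq_0_iff[of I a] by auto
  then show ?thesis by (intro exI[of _ "\<lambda>_ _. 0"]) auto
next
  case False
  define T where "T = sum w J"
  have "T > 0" using False assms(4) sum_nonneg[of J w] by (simp add: T_def)
  define x where "x r j = a r * w j / T" for r j
  have "(\<Sum>r\<in>I. x r j) = w j" for j
    using \<open>T > 0\<close> assms(5)
    by (simp add: x_def T_def sum_divide_distrib[symmetric] sum_distrib_right[symmetric])
  moreover have "(\<Sum>j\<in>J. x r j) = a r" for r
    using \<open>T > 0\<close>
    by (simp add: x_def T_def sum_divide_distrib[symmetric] sum_distrib_left[symmetric])
  moreover have "\<forall>r\<in>I. \<forall>j\<in>J. x r j \<ge> 0"
    using assms(3,4) \<open>T > 0\<close> by (simp add: x_def)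
  ultimately show ?thesis by blast
qed

lemma exists_fractional_topup:
  fixes b :: "'i \<Rightarrow> real" and w :: "'j \<Rightarrow> real"
  assumes "finite I" "finite J" "I \<noteq> {}"
    and "\<And>r. r \<in> I \<Longrightarrow> b r < c" and "\<And>j. j \<in> J \<Longrightarrow> w j \<ge> 0"
    and "sum b I + sum w J > real (card I) * c"
  shows "\<exists>x. (\<forall>r\<in>I. \<forall>j\<in>J. x r j \<ge> 0)
           \<and> (\<forall>j\<in>J. (\<Sum>r\<in>I. x r j) = w j)
           \<and> (\<forall>r\<in>I. b r + (\<Sum>j\<in>J. x r j) > c)"
proof -
  define e where "e = (sum b I + sum w J - real (card I) * c) / real (card I)"
  have "card I > 0" using assms(1,3) by (simp add: card_gt_0_iff)
  then have "e > 0" using assms(6) by (simp add: e_def)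
  have "(\<Sum>r\<in>I. c - b r + e) = sum w J"
    using \<open>card I > 0\<close> by (simp add: sum.distrib sum_subtractf e_def)
  moreover have "c - b r + e \<ge> 0" if "r \<in> I" for r
    using assms(4)[OF that] \<open>e > 0\<close> by linarith
  ultimately obtain x where "\<forall>r\<in>I. \<forall>j\<in>J. x r j \<ge> 0" "\<forall>j\<in>J. (\<Sum>r\<in>I. x r j) = w j"
      and "\<forall>r\<in>I. (\<Sum>j\<in>J. x r j) = c - b r + e"
    using exists_transport_plan[of I J "\<lambda>r. c - b r + e" w] assms(1,2,5) by blast
  with \<open>e > 0\<close> show ?thesis by (intro exI[of _ x]) auto
qed

lemma sum_interleaved_blocks:
  fixes f :: "nat \<Rightarrow> 'a::comm_monoid_add"
  shows "(\<Sum>j=1..m*k. f j) = (\<Sum>r=1..k. \<Sum>i<m. f (i*k + r))"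
proof (induction m)
  case 0
  then show ?case by simp
next
  case (Suc m)
  have "(\<Sum>j=1..Suc m * k. f j) = (\<Sum>j=1..m*k. f j) + (\<Sum>j=m*k+1..m*k+k. f j)"
    using sum.ub_add_nat[of 1 "m*k" f k] by (simp add: add.commute)
  also have "(\<Sum>j=m*k+1..m*k+k. f j) = (\<Sum>r=1..k. f (m*k + r))"
    using sum.shift_bounds_cl_nat_ivl[of f 1 "m*k" k] by (simp only: add.commute)
  finally show ?case using Suc.IH by (simp add: sum.distrib)
qed

lemma sum_wext_split:
  "(\<Sum>j=1..N. w j) = (\<Sum>j=1..M. wext w N j) + (\<Sum>j\<in>{M<..N}. w j)"
proof -
  have "{1..N} = ({1..M} \<inter> {1..N}) \<union> {M<..N}" by auto
  then have "(\<Sum>j=1..N. w j) = (\<Sum>j\<in>{1..M} \<inter> {1..N}. w j) + (\<Sum>j\<in>{M<..N}. w j)"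
    by (metis sum.union_disjoint finite_Int finite_atLeastAtMost finite_greaterThanAtMost
        disjoint_iff IntD1 atLeastAtMost_iff greaterThanAtMost_iff not_less)
  also have "(\<Sum>j\<in>{1..M} \<inter> {1..N}. w j) = (\<Sum>j\<in>{1..M}. if j \<in> {1..N} then w j else 0)"
    by (rule sum.inter_restrict) simp
  also have "\<dots> = (\<Sum>j=1..M. wext w N j)"
    by (rule sum.cong) (auto simp: wext_def)
  finally show ?thesis .
qed

lemma wext_antimono:
  assumes "\<And>i j. 1 \<le> i \<Longrightarrow> i \<le> j \<Longrightarrow> j \<le> N \<Longrightarrow> w j \<le> w i"
    and "\<And>j. 1 \<le> j \<Longrightarrow> j \<le> N \<Longrightarrow> w j \<ge> 0"
    and "1 \<le> i" "i \<le> j"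
  shows "wext w N j \<le> wext w N i"
  using assms by (auto simp: wext_def)

theorem lemma5p5:
  fixes k N :: nat and \<Delta> :: real and w :: "nat \<Rightarrow> real"
  assumes "k \<ge> 1" and "\<Delta> \<ge> 0"
    and "\<And>i j. 1 \<le> i \<Longrightarrow> i \<le> j \<Longrightarrow> j \<le> N \<Longrightarrow> w j \<le> w i"
    and "\<And>j. 1 \<le> j \<Longrightarrow> j \<le> N \<Longrightarrow> w j \<ge> 0"
    and "wext w N 1 + wext w N (k + 1) < 7/9"
    and "wext w N (2*k + 1) \<le> \<Delta>"
    and "(\<Sum>j=1..N. w j) > real k * (7/9 + \<Delta>)"
  shows "\<exists>x :: nat \<Rightarrow> nat \<Rightarrow> real.
           (\<forall>r\<in>{1..k}. \<forall>j\<in>{3*k<..N}. x r j \<ge> 0)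
         \<and> (\<forall>j\<in>{3*k<..N}. (\<Sum>r=1..k. x r j) = w j)
         \<and> (\<forall>r\<in>{1..k}. wext w N r + wext w N (k + r) + wext w N (2*k + r)
                           + (\<Sum>j\<in>{3*k<..N}. x r j) > 7/9 + \<Delta>)"
proof -
  define b where "b r = wext w N r + wext w N (k + r) + wext w N (2*k + r)" for r
  note antimono = wext_antimono[of N w, OF assms(3,4)]
  have b_below: "b r < 7/9 + \<Delta>" if "r \<in> {1..k}" for r
    using that assms(5,6) antimono[of 1 r] antimono[of "k+1" "k+r"] antimono[of "2*k+1" "2*k+r"]
    by (simp add: b_def)
  have "(\<Sum>i<3. wext w N (i*k + r)) = b r" for r
    by (simp add: b_def eval_nat_numeral add_ac)
  then have "(\<Sum>j=1..N. w j) = (\<Sum>r=1..k. b r) + (\<Sum>j\<in>{3*k<..N}. w j)"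
    using sum_wext_split[of w N "3*k"] sum_interleaved_blocks[of "wext w N" 3 k] by simp
  then show ?thesis
    using exists_fractional_topup[of "{1..k}" "{3*k<..N}" b "7/9 + \<Delta>" w] b_below assms(1,4,7)
    by (simp add: b_def)
qed

end
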